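(* Let $n\ge2$ and let $X,Y$ be identically distributed random variables taking values in $\{x_1,\dots,x_n\}$ with $x_1<\dots<x_n$, each value with positive probability. Let $P=(p_{ij})_{n\times n}$ with $p_{ij}=\mathbb P(X=x_i,Y=x_j)$, $\mathbf p=P\mathbf 1_n=(p_1,\dots,p_n)^\top$ and $D=\mathrm{diag}(\mathbf p)$. Then for $r\in[-1,1]$, $(X,Y)\in\mathrm{IC}_r$ if and only if $$\frac{P+P^\top}{2}=rD+(1-r)\mathbf p\mathbf p^\top.$$ Furthermore, in this case $\underline r_{\mathbf p}\le r\le1$, where $$\underline r_{\mathbf p}=\max\Big(\max_{j\in[n]}\Big(-\frac{p_j}{1-p_j}\Big),\ \max_{i,j\in[n],\,i\ne j}\Big(1-\frac1{p_ip_j}\Big)\Big).$$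
   Context: $(X,Y)\in\mathrm{IC}_r$ means $\mathrm{Corr}(X,Y)=\mathrm{Corr}(g(X),g(Y))=r$ for every measurable $g:\mathbb R\to\mathbb R$ such that $g(X),g(Y)$ are non-degenerate with finite variance. (Equivalently the condition says $(X,Y)$ is quasi-$r$-Fréchet.) *)

theory Defs
  imports "HOL-Probability.Probability"
begin

definition covar :: "'a measure \<Rightarrow> ('a \<Rightarrow> real) \<Rightarrow> ('a \<Rightarrow> real) \<Rightarrow> real" where
  "covar M U V = (LINT w|M. (U w - (LINT z|M. U z)) * (V w - (LINT z|M. V z)))"

definition corr :: "'a measure \<Rightarrow> ('a \<Rightarrow> real) \<Rightarrow> ('a \<Rightarrow> real) \<Rightarrow> real" where
  "corr M U V = covar M U V / sqrt (covar M U U * covar M V V)"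

definition admissible_rv :: "'a measure \<Rightarrow> ('a \<Rightarrow> real) \<Rightarrow> bool" where
  "admissible_rv M U \<longleftrightarrow> U \<in> borel_measurable M \<and> integrable M (\<lambda>w. (U w)\<^sup>2)
     \<and> \<not> (\<exists>c. AE w in M. U w = c)"

definition IC :: "'a measure \<Rightarrow> ('a \<Rightarrow> real) \<Rightarrow> ('a \<Rightarrow> real) \<Rightarrow> real \<Rightarrow> bool" where
  "IC M X Y r \<longleftrightarrow> corr M X Y = r \<and>
     (\<forall>g \<in> borel_measurable borel.
        admissible_rv M (\<lambda>w. g (X w)) \<and> admissible_rv M (\<lambda>w. g (Y w))
        \<longrightarrow> corr M (\<lambda>w. g (X w)) (\<lambda>w. g (Y w)) = r)"

end

theory Submission
  imports Defs
begin

text \<open>Write \<open>v\<^sub>a = g(x\<^sub>a)\<close> for a measurable \<open>g\<close>. Since \<open>X\<close> and \<open>Y\<close> have the same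
  marginal \<open>p\<close>, both \<open>g(X)\<close> and \<open>g(Y)\<close> have mean \<open>p\<^sup>Tv\<close> and variance \<open>v\<^sup>TDv - (p\<^sup>Tv)\<^sup>2\<close>, while
  their covariance is \<open>v\<^sup>TPv - (p\<^sup>Tv)\<^sup>2\<close>. So the correlation of \<open>g(X)\<close> and \<open>g(Y)\<close> equals \<open>r\<close>
  exactly when \<open>v\<^sup>T(P - rD - (1 - r)pp\<^sup>T)v = 0\<close>; for degenerate \<open>g\<close> (constant \<open>v\<close>) this holds
  anyway. Every \<open>v\<close> arises from some \<open>g\<close>, and a quadratic form vanishes identically iff the
  symmetric part of its matrix is zero. On the diagonal this says
  \<open>P\<^sub>j\<^sub>j = r p\<^sub>j + (1 - r) p\<^sub>j\<^sup>2 \<ge> 0\<close>, which gives \<open>r \<ge> -p\<^sub>j / (1 - p\<^sub>j)\<close>; the off-diagonal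
  terms \<open>1 - 1 / (p\<^sub>i p\<^sub>j)\<close> of the lower bound are at most \<open>-3\<close>, as \<open>p\<^sub>i p\<^sub>j \<le> 1/4\<close>.\<close>

lemma integral_finite_valued_pair:
  fixes F :: "real \<Rightarrow> real \<Rightarrow> real" and x :: "'i \<Rightarrow> real"
  assumes "finite_measure M" and "finite I" and "inj_on x I"
    and [measurable]: "X \<in> borel_measurable M" "Y \<in> borel_measurable M"
    and X_range: "\<And>w. w \<in> space M \<Longrightarrow> X w \<in> x ` I"
    and Y_range: "\<And>w. w \<in> space M \<Longrightarrow> Y w \<in> x ` I"
  shows "integrable M (\<lambda>w. F (X w) (Y w))"
    and "(LINT w|M. F (X w) (Y w))
      = (\<Sum>a\<in>I. \<Sum>b\<in>I. F (x a) (x b) * measure M {w \<in> space M. X w = x a \<and> Y w = x b})"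
proof -
  interpret finite_measure M by fact
  define A where "A a b = {w \<in> space M. X w = x a \<and> Y w = x b}" for a b
  have A_sets [measurable]: "A a b \<in> sets M" for a b
    unfolding A_def by measurable
  have decomp: "F (X w) (Y w) = (\<Sum>a\<in>I. \<Sum>b\<in>I. F (x a) (x b) * indicator (A a b) w)"
    if "w \<in> space M" for w
  proof -
    obtain i j where ij: "i \<in> I" "j \<in> I" "X w = x i" "Y w = x j"
      using X_range Y_range \<open>w \<in> space M\<close> by blast
    have "indicator (A a b) w = (if a = i then if b = j then 1 else 0 else 0 :: real)"
      if "a \<in> I" "b \<in> I" for a b
      using ij that \<open>w \<in> space M\<close> by (auto simp: A_def indicator_def inj_on_eq_iff[OF \<open>inj_on x I\<close>])
    then have "(\<Sum>a\<in>I. \<Sum>b\<in>I. F (x a) (x b) * indicator (A a b) w)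
        = (\<Sum>a\<in>I. \<Sum>b\<in>I. if a = i then if b = j then F (x i) (x j) else 0 else 0)"
      by (intro sum.cong) auto
    also have "\<dots> = F (X w) (Y w)"
      using ij \<open>finite I\<close> by (simp add: sum.If_cases)
    finally show ?thesis ..
  qed
  have term_integrable: "integrable M (\<lambda>w. F (x a) (x b) * indicator (A a b) w)" for a b
    by (intro integrable_mult_right integrable_real_indicator) (auto simp: less_top[symmetric])
  then show "integrable M (\<lambda>w. F (X w) (Y w))"
    by (subst Bochner_Integration.integrable_cong[OF refl decomp]) auto
  have "(LINT w|M. F (X w) (Y w)) = (LINT w|M. (\<Sum>a\<in>I. \<Sum>b\<in>I. F (x a) (x b) * indicator (A a b) w))"
    by (rule Bochner_Integration.integral_cong[OF refl decomp])
  also have "\<dots> = (\<Sum>a\<in>I. \<Sum>b\<in>I. F (x a) (x b) * measure M (A a b))"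
    using term_integrable
    by (simp add: Bochner_Integration.integral_sum Int_absorb2 sets.sets_into_space)
  finally show "(LINT w|M. F (X w) (Y w))
      = (\<Sum>a\<in>I. \<Sum>b\<in>I. F (x a) (x b) * measure M {w \<in> space M. X w = x a \<and> Y w = x b})"
    by (simp only: A_def)
qed

lemma AE_eq_const_iff_finite_values:
  fixes Z :: "'a \<Rightarrow> real"
  assumes [measurable]: "Z \<in> borel_measurable M"
    and range: "\<And>w. w \<in> space M \<Longrightarrow> Z w \<in> S"
    and pos: "\<And>s. s \<in> S \<Longrightarrow> measure M {w \<in> space M. Z w = s} > 0"
  shows "(AE w in M. g (Z w) = c) \<longleftrightarrow> (\<forall>s\<in>S. g s = c)"
proof
  assume "AE w in M. g (Z w) = c"
  then obtain N where N: "{w \<in> space M. g (Z w) \<noteq> c} \<subseteq> N" "emeasure M N = 0" "N \<in> sets M"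
    by (rule AE_E)
  show "\<forall>s\<in>S. g s = c"
  proof (rule ballI, rule ccontr)
    fix s assume "s \<in> S" "g s \<noteq> c"
    then have "{w \<in> space M. Z w = s} \<subseteq> N" using N(1) by auto
    then have "emeasure M {w \<in> space M. Z w = s} \<le> emeasure M N"
      using N(3) by (rule emeasure_mono)
    then have "emeasure M {w \<in> space M. Z w = s} = 0"
      using N(2) by simp
    then show False using pos[OF \<open>s \<in> S\<close>] by (simp add: measure_def)
  qed
next
  assume "\<forall>s\<in>S. g s = c"
  then show "AE w in M. g (Z w) = c" using range by (intro AE_I2) auto
qed

lemma quadratic_form_eq_0_iff:
  fixes A :: "'i \<Rightarrow> 'i \<Rightarrow> real"
  assumes "finite I"
  shows "(\<forall>v. (\<Sum>a\<in>I. \<Sum>b\<in>I. v a * v b * A a b) = 0) \<longleftrightarrow> (\<forall>a\<in>I. \<forall>b\<in>I. A a b + A b a = 0)"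
proof
  assume Q: "\<forall>v. (\<Sum>a\<in>I. \<Sum>b\<in>I. v a * v b * A a b) = 0"
  have block: "(\<Sum>a\<in>S. \<Sum>b\<in>S. A a b) = 0" if "S \<subseteq> I" for S
  proof -
    have "{a \<in> I. a \<in> S} = S"
      using that by auto
    then show ?thesis
      using Q[rule_format, of "indicator S"] \<open>finite I\<close>
      by (simp add: mult.assoc sum_distrib_left[symmetric])
  qed
  show "\<forall>a\<in>I. \<forall>b\<in>I. A a b + A b a = 0"
  proof (intro ballI)
    fix a b assume "a \<in> I" "b \<in> I"
    then show "A a b + A b a = 0"
      using block[of "{a}"] block[of "{b}"] block[of "{a, b}"] by (cases "a = b") auto
  qed
next
  assume skew: "\<forall>a\<in>I. \<forall>b\<in>I. A a b + A b a = 0"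
  show "\<forall>v. (\<Sum>a\<in>I. \<Sum>b\<in>I. v a * v b * A a b) = 0"
  proof
    fix v :: "'i \<Rightarrow> real"
    have "(\<Sum>a\<in>I. \<Sum>b\<in>I. v a * v b * A a b) = (\<Sum>a\<in>I. \<Sum>b\<in>I. v a * v b * A b a)"
      by (subst sum.swap) (simp add: mult.commute)
    then have "2 * (\<Sum>a\<in>I. \<Sum>b\<in>I. v a * v b * A a b) = (\<Sum>a\<in>I. \<Sum>b\<in>I. v a * v b * (A a b + A b a))"
      by (simp add: distrib_left sum.distrib)
    also have "\<dots> = 0"
      using skew by simp
    finally show "(\<Sum>a\<in>I. \<Sum>b\<in>I. v a * v b * A a b) = 0" by simp
  qed
qed

lemma integral_indicator_singleton_comp:
  "(LINT w|M. indicator {c} (Z w) :: real) = measure M {w \<in> space M. Z w = c}"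
proof -
  have "(LINT w|M. indicator {c} (Z w) :: real) = (LINT w|M. indicator {w \<in> space M. Z w = c} w)"
    by (rule Bochner_Integration.integral_cong) (auto simp: indicator_def)
  then show ?thesis
    by (simp add: Int_absorb2)
qed

locale finite_valued_pair = prob_space M for M :: "'a measure" +
  fixes X Y :: "'a \<Rightarrow> real" and n :: nat and x :: "nat \<Rightarrow> real"
    and P :: "nat \<Rightarrow> nat \<Rightarrow> real" and p :: "nat \<Rightarrow> real"
  assumes X_measurable [measurable]: "X \<in> borel_measurable M"
    and Y_measurable [measurable]: "Y \<in> borel_measurable M"
    and two_le_n: "2 \<le> n"
    and x_strict_mono: "\<And>i j. i < j \<Longrightarrow> j < n \<Longrightarrow> x i < x j"
    and X_range: "\<And>w. w \<in> space M \<Longrightarrow> X w \<in> x ` {..<n}"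
    and Y_range: "\<And>w. w \<in> space M \<Longrightarrow> Y w \<in> x ` {..<n}"
    and same_distr: "distr M borel X = distr M borel Y"
    and X_point_mass_pos: "\<And>i. i < n \<Longrightarrow> measure M {w \<in> space M. X w = x i} > 0"
    and P_eq: "\<And>i j. P i j = measure M {w \<in> space M. X w = x i \<and> Y w = x j}"
    and p_eq: "\<And>i. p i = (\<Sum>j<n. P i j)"
begin

lemma inj_on_x: "inj_on x {..<n}"
  by (rule strict_mono_on_imp_inj_on) (auto intro: monotone_onI x_strict_mono)

lemma indicator_x: "a < n \<Longrightarrow> i < n \<Longrightarrow> indicator {x i} (x a) = (if a = i then 1 else 0 :: real)"
  using inj_on_eq_iff[OF inj_on_x] by (auto simp: indicator_def)

lemma integrable_pair: "integrable M (\<lambda>w. F (X w) (Y w) :: real)"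
  by (rule integral_finite_valued_pair(1)[OF _ _ inj_on_x X_measurable Y_measurable X_range Y_range])
    (auto intro: finite_measure_axioms)

lemma integral_pair: "(LINT w|M. F (X w) (Y w)) = (\<Sum>a<n. \<Sum>b<n. F (x a) (x b) * P a b)"
  unfolding P_eq
  by (rule integral_finite_valued_pair(2)[OF _ _ inj_on_x X_measurable Y_measurable X_range Y_range])
    (auto intro: finite_measure_axioms)

lemma row_sums: "(\<Sum>a<n. \<Sum>b<n. u a * P a b) = (\<Sum>a<n. u a * p a)"
  by (simp add: p_eq sum_distrib_left)

lemma sum_indicator_x: "i < n \<Longrightarrow> (\<Sum>a<n. indicator {x i} (x a) * u a) = (u i :: real)"
proof -
  assume "i < n"
  then have "(\<Sum>a<n. indicator {x i} (x a) * u a) = (\<Sum>a<n. if a = i then u a else 0)"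
    by (intro sum.cong) (auto simp: indicator_x)
  with \<open>i < n\<close> show ?thesis by simp
qed

lemma measure_X_eq: "i < n \<Longrightarrow> measure M {w \<in> space M. X w = x i} = p i"
  using integral_pair[of "\<lambda>s t. indicator {x i} s"]
  by (simp only: integral_indicator_singleton_comp row_sums sum_indicator_x)

lemma measure_Y_eq: "measure M {w \<in> space M. Y w = c} = measure M {w \<in> space M. X w = c}"
proof -
  have "measure M {w \<in> space M. Z w = c} = measure (distr M borel Z) {c}"
    if "Z \<in> borel_measurable M" for Z :: "'a \<Rightarrow> real"
    using that by (subst measure_distr) (auto intro: arg_cong[where f = "measure M"])
  then show ?thesis
    using same_distr by simp
qed

lemma column_sums:
  assumes "b < n"
  shows "(\<Sum>a<n. P a b) = p b"
proof -
  have "(\<Sum>a<n. P a b) = measure M {w \<in> space M. Y w = x b}"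
    using integral_pair[of "\<lambda>s t. indicator {x b} t"]
    by (simp only: integral_indicator_singleton_comp sum_indicator_x[OF assms])
  also have "\<dots> = p b"
    using measure_Y_eq measure_X_eq assms by simp
  finally show ?thesis .
qed

lemma column_sums_weighted: "(\<Sum>a<n. \<Sum>b<n. u b * P a b) = (\<Sum>b<n. u b * p b)"
  by (subst sum.swap) (simp add: column_sums sum_distrib_left[symmetric])

lemma sum_p: "(\<Sum>a<n. p a) = 1"
  using integral_pair[of "\<lambda>s t. 1"] row_sums[of "\<lambda>a. 1"] by (simp add: prob_space)

lemma p_pos: "i < n \<Longrightarrow> 0 < p i"
  using X_point_mass_pos measure_X_eq by simp

definition pmean :: "(nat \<Rightarrow> real) \<Rightarrow> real" where
  "pmean v = (\<Sum>a<n. v a * p a)"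

definition pvar :: "(nat \<Rightarrow> real) \<Rightarrow> real" where
  "pvar v = (\<Sum>a<n. (v a - pmean v)\<^sup>2 * p a)"

definition pcov :: "(nat \<Rightarrow> real) \<Rightarrow> real" where
  "pcov v = (\<Sum>a<n. \<Sum>b<n. (v a - pmean v) * (v b - pmean v) * P a b)"

lemma integral_X_comp: "(LINT w|M. g (X w)) = pmean (\<lambda>a. g (x a))"
  using integral_pair[of "\<lambda>s t. g s"] by (simp add: row_sums pmean_def)

lemma integral_Y_comp: "(LINT w|M. g (Y w)) = pmean (\<lambda>a. g (x a))"
  using integral_pair[of "\<lambda>s t. g t"] by (simp add: column_sums_weighted pmean_def)

lemma covar_comp: "covar M (\<lambda>w. g (X w)) (\<lambda>w. g (Y w)) = pcov (\<lambda>a. g (x a))"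
  using integral_pair[of "\<lambda>s t. (g s - pmean (\<lambda>a. g (x a))) * (g t - pmean (\<lambda>a. g (x a)))"]
  by (simp add: covar_def integral_X_comp integral_Y_comp pcov_def)

lemma covar_X_X_comp: "covar M (\<lambda>w. g (X w)) (\<lambda>w. g (X w)) = pvar (\<lambda>a. g (x a))"
  using integral_pair[of "\<lambda>s t. (g s - pmean (\<lambda>a. g (x a)))\<^sup>2"]
  by (simp add: covar_def integral_X_comp pvar_def row_sums power2_eq_square)

lemma covar_Y_Y_comp: "covar M (\<lambda>w. g (Y w)) (\<lambda>w. g (Y w)) = pvar (\<lambda>a. g (x a))"
  using integral_pair[of "\<lambda>s t. (g t - pmean (\<lambda>a. g (x a)))\<^sup>2"]
  by (simp add: covar_def integral_Y_comp pvar_def column_sums_weighted power2_eq_square)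

lemma pvar_nonneg: "0 \<le> pvar v"
  unfolding pvar_def using p_pos by (intro sum_nonneg) (simp add: less_imp_le)

lemma corr_comp:
  "corr M (\<lambda>w. g (X w)) (\<lambda>w. g (Y w)) = pcov (\<lambda>a. g (x a)) / pvar (\<lambda>a. g (x a))"
  using pvar_nonneg by (simp add: corr_def covar_comp covar_X_X_comp covar_Y_Y_comp)

lemma pvar_eq_0_iff: "pvar v = 0 \<longleftrightarrow> (\<forall>a<n. v a = pmean v)"
proof
  assume "pvar v = 0"
  then have "\<forall>a<n. (v a - pmean v)\<^sup>2 * p a = 0"
    unfolding pvar_def using p_pos by (subst (asm) sum_nonneg_eq_0_iff) (auto simp: less_imp_le)
  then show "\<forall>a<n. v a = pmean v"
    using p_pos by fastforce
qed (simp add: pvar_def)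

lemma pvar_pos_iff: "0 < pvar v \<longleftrightarrow> \<not> (\<exists>c. \<forall>a<n. v a = c)"
proof -
  have "pmean v = c" if "\<forall>a<n. v a = c" for c
    using that sum_p by (simp add: pmean_def sum_distrib_left[symmetric])
  then show ?thesis
    using pvar_nonneg[of v] pvar_eq_0_iff[of v] by (metis order_less_le)
qed

lemma admissible_comp_iff:
  assumes g: "g \<in> borel_measurable borel" and Z: "Z \<in> {X, Y}"
  shows "admissible_rv M (\<lambda>w. g (Z w)) \<longleftrightarrow> 0 < pvar (\<lambda>a. g (x a))"
proof -
  have [measurable]: "Z \<in> borel_measurable M"
    using Z by auto
  have "integrable M (\<lambda>w. (g (Z w))\<^sup>2)"
    using Z integrable_pair[of "\<lambda>s t. (g s)\<^sup>2"] integrable_pair[of "\<lambda>s t. (g t)\<^sup>2"] by auto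
  moreover have "(AE w in M. g (Z w) = c) \<longleftrightarrow> (\<forall>s\<in>x ` {..<n}. g s = c)" for c
  proof (rule AE_eq_const_iff_finite_values)
    show "\<And>w. w \<in> space M \<Longrightarrow> Z w \<in> x ` {..<n}"
      using Z X_range Y_range by auto
    show "\<And>s. s \<in> x ` {..<n} \<Longrightarrow> 0 < measure M {w \<in> space M. Z w = s}"
      using Z measure_Y_eq X_point_mass_pos by auto
  qed measurable
  ultimately show ?thesis
    using g by (auto simp: admissible_rv_def pvar_pos_iff)
qed

definition defect :: "real \<Rightarrow> nat \<Rightarrow> nat \<Rightarrow> real" where
  "defect r a b = P a b - r * (if a = b then p a else 0) - (1 - r) * p a * p b"

lemma pcov_minus_pvar: "pcov v - r * pvar v = (\<Sum>a<n. \<Sum>b<n. v a * v b * defect r a b)"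
proof -
  define m where "m = pmean v"
  have m: "(\<Sum>a<n. v a * p a) = m"
    by (simp add: m_def pmean_def)
  have "pcov v = (\<Sum>a<n. \<Sum>b<n. v a * v b * P a b) - m * (\<Sum>a<n. \<Sum>b<n. v b * P a b)
      - m * (\<Sum>a<n. \<Sum>b<n. v a * P a b) + m\<^sup>2 * (\<Sum>a<n. \<Sum>b<n. P a b)"
    unfolding pcov_def m_def[symmetric]
    by (simp add: algebra_simps power2_eq_square sum.distrib sum_subtractf sum_distrib_left)
  also have "\<dots> = (\<Sum>a<n. \<Sum>b<n. v a * v b * P a b) - m\<^sup>2"
    using row_sums[of v] row_sums[of "\<lambda>_. 1"] column_sums_weighted[of v] sum_p m
    by (simp add: power2_eq_square)
  finally have pcov: "pcov v = (\<Sum>a<n. \<Sum>b<n. v a * v b * P a b) - m\<^sup>2" .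
  have "pvar v = (\<Sum>a<n. (v a)\<^sup>2 * p a) - 2 * m * (\<Sum>a<n. v a * p a) + m\<^sup>2 * (\<Sum>a<n. p a)"
    unfolding pvar_def m_def[symmetric]
    by (simp add: algebra_simps power2_eq_square sum.distrib sum_subtractf sum_distrib_left)
  then have pvar: "pvar v = (\<Sum>a<n. (v a)\<^sup>2 * p a) - m\<^sup>2"
    using m sum_p by (simp add: power2_eq_square)
  have diag: "(\<Sum>a<n. \<Sum>b<n. v a * v b * (if a = b then p a else 0)) = (\<Sum>a<n. (v a)\<^sup>2 * p a)"
    by (simp add: power2_eq_square if_distrib[of "\<lambda>t. _ * t"] cong: if_cong)
  have rank_one: "(\<Sum>a<n. \<Sum>b<n. v a * v b * (p a * p b)) = m\<^sup>2"
    unfolding m[symmetric] power2_eq_square sum_product by (simp add: algebra_simps)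
  have "(\<Sum>a<n. \<Sum>b<n. v a * v b * defect r a b) = (\<Sum>a<n. \<Sum>b<n. v a * v b * P a b)
      - r * (\<Sum>a<n. \<Sum>b<n. v a * v b * (if a = b then p a else 0))
      - (1 - r) * (\<Sum>a<n. \<Sum>b<n. v a * v b * (p a * p b))"
    unfolding defect_def by (simp add: algebra_simps sum.distrib sum_subtractf sum_distrib_left)
  then show ?thesis
    unfolding pcov pvar diag rank_one by (simp add: algebra_simps)
qed

lemma exists_measurable_interpolant: "\<exists>g \<in> borel_measurable borel. \<forall>a<n. g (x a) = (v a :: real)"
proof (intro bexI allI impI)
  show "(\<lambda>t. \<Sum>i<n. indicator {x i} t * v i) \<in> borel_measurable borel"
    by measurable
  fix a assume "a < n"
  then have "(\<Sum>i<n. indicator {x i} (x a) * v i) = (\<Sum>i<n. if a = i then v i else 0)"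
    by (intro sum.cong) (auto simp: indicator_x)
  with \<open>a < n\<close> show "(\<Sum>i<n. indicator {x i} (x a) * v i) = v a"
    by simp
qed

lemma IC_iff_quadratic_form: "IC M X Y r \<longleftrightarrow> (\<forall>v. (\<Sum>a<n. \<Sum>b<n. v a * v b * defect r a b) = 0)"
proof
  assume IC: "IC M X Y r"
  show "\<forall>v. (\<Sum>a<n. \<Sum>b<n. v a * v b * defect r a b) = 0"
  proof
    fix v :: "nat \<Rightarrow> real"
    obtain g where g: "g \<in> borel_measurable borel" "\<And>a. a < n \<Longrightarrow> g (x a) = v a"
      using exists_measurable_interpolant[of v] by blast
    define u where "u a = g (x a)" for a
    have "(\<Sum>a<n. \<Sum>b<n. v a * v b * defect r a b) = pcov u - r * pvar u"
      by (simp add: pcov_minus_pvar u_def g(2))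
    also have "\<dots> = 0"
    proof (cases "0 < pvar u")
      case True
      then have "corr M (\<lambda>w. g (X w)) (\<lambda>w. g (Y w)) = r"
        using IC g(1) admissible_comp_iff[OF g(1)] unfolding IC_def u_def by auto
      with True show ?thesis
        by (simp add: corr_comp u_def[symmetric] field_simps)
    next
      case False
      then have "pvar u = 0"
        using pvar_nonneg[of u] by simp
      then show ?thesis
        using pvar_eq_0_iff[of u] by (simp add: pcov_def)
    qed
    finally show "(\<Sum>a<n. \<Sum>b<n. v a * v b * defect r a b) = 0" .
  qed
next
  assume Q: "\<forall>v. (\<Sum>a<n. \<Sum>b<n. v a * v b * defect r a b) = 0"
  have corr_eq: "corr M (\<lambda>w. g (X w)) (\<lambda>w. g (Y w)) = r" if "0 < pvar (\<lambda>a. g (x a))" for g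
    using that Q pcov_minus_pvar[of "\<lambda>a. g (x a)" r] by (simp add: corr_comp field_simps)
  have "\<not> (\<exists>c. \<forall>a<n. x a = c)"
  proof
    assume "\<exists>c. \<forall>a<n. x a = c"
    then have "x 0 = x 1"
      using two_le_n by auto
    moreover have "x 0 < x 1"
      using two_le_n by (intro x_strict_mono) auto
    ultimately show False by simp
  qed
  then have "0 < pvar x"
    by (simp add: pvar_pos_iff)
  then have "corr M X Y = r"
    using corr_eq[of "\<lambda>t. t"] by simp
  then show "IC M X Y r"
    unfolding IC_def using corr_eq admissible_comp_iff by blast
qed

lemma IC_iff_symmetric_part:
  "IC M X Y r \<longleftrightarrow> (\<forall>i<n. \<forall>j<n. (P i j + P j i) / 2 = r * (if i = j then p i else 0) + (1 - r) * p i * p j)"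
proof -
  have "defect r i j + defect r j i = 0 \<longleftrightarrow>
      (P i j + P j i) / 2 = r * (if i = j then p i else 0) + (1 - r) * p i * p j" for i j
    by (cases "i = j") (auto simp: defect_def field_simps)
  then show ?thesis
    unfolding IC_iff_quadratic_form quadratic_form_eq_0_iff[OF finite_lessThan]
    by (simp only: Ball_def lessThan_iff)
qed

lemma p_pair_sum_le: "i < n \<Longrightarrow> j < n \<Longrightarrow> i \<noteq> j \<Longrightarrow> p i + p j \<le> 1"
proof -
  assume "i < n" "j < n" "i \<noteq> j"
  then have "(\<Sum>a\<in>{i, j}. p a) \<le> (\<Sum>a<n. p a)"
    using p_pos by (intro sum_mono2) (auto simp: less_imp_le)
  with \<open>i \<noteq> j\<close> show ?thesis
    by (simp add: sum_p)
qed

lemma p_less_1: "j < n \<Longrightarrow> p j < 1"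
proof -
  assume "j < n"
  define k :: nat where "k = (if j = 0 then 1 else 0)"
  have "k < n" "k \<noteq> j"
    using two_le_n by (auto simp: k_def)
  then show ?thesis
    using p_pair_sum_le[OF \<open>j < n\<close> \<open>k < n\<close>] p_pos[OF \<open>k < n\<close>] by simp
qed

lemma diagonal_lower_bound:
  assumes "j < n" and "P j j = r * p j + (1 - r) * p j * p j"
  shows "- (p j / (1 - p j)) \<le> r"
proof -
  have "0 \<le> P j j"
    by (simp add: P_eq)
  then have "0 \<le> p j * (r + (1 - r) * p j)"
    using assms(2) by (simp add: algebra_simps)
  then have "0 \<le> r + (1 - r) * p j"
    using p_pos[OF assms(1)] by (simp add: zero_le_mult_iff)
  then have "- p j \<le> r * (1 - p j)"
    by (simp add: algebra_simps)
  moreover have "0 < 1 - p j"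
    using p_less_1[OF assms(1)] by simp
  ultimately have "- p j / (1 - p j) \<le> r"
    by (subst pos_divide_le_eq) (simp_all add: mult.commute)
  then show ?thesis
    by simp
qed

lemma off_diagonal_bound: "i < n \<Longrightarrow> j < n \<Longrightarrow> i \<noteq> j \<Longrightarrow> 1 - 1 / (p i * p j) \<le> -3"
proof -
  assume ij: "i < n" "j < n" "i \<noteq> j"
  have "4 * (p i * p j) \<le> (p i + p j)\<^sup>2"
    using sum_squares_ge_zero[of "p i - p j" 0] by (simp add: power2_eq_square algebra_simps)
  also have "\<dots> \<le> 1"
    using p_pair_sum_le[OF ij] p_pos[OF ij(1)] p_pos[OF ij(2)] by (simp add: power_le_one)
  finally show ?thesis
    using p_pos[OF ij(1)] p_pos[OF ij(2)] by (simp add: field_simps)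
qed

lemma IC_lower_bound:
  assumes "IC M X Y r" and "-1 \<le> r"
  shows "max (Max ((\<lambda>j. - (p j / (1 - p j))) ` {..<n}))
      (Max {1 - 1 / (p i * p j) | i j. i < n \<and> j < n \<and> i \<noteq> j}) \<le> r"
proof -
  have "P j j = r * p j + (1 - r) * p j * p j" if "j < n" for j
  proof -
    have "(P j j + P j j) / 2 = r * (if j = j then p j else 0) + (1 - r) * p j * p j"
      using assms(1) that unfolding IC_iff_symmetric_part by blast
    then show ?thesis by simp
  qed
  then have "Max ((\<lambda>j. - (p j / (1 - p j))) ` {..<n}) \<le> r"
    using two_le_n by (subst Max_le_iff) (auto simp: lessThan_empty_iff intro: diagonal_lower_bound)
  moreover have "Max {1 - 1 / (p i * p j) | i j. i < n \<and> j < n \<and> i \<noteq> j} \<le> r"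
  proof (subst Max_le_iff)
    show "finite {1 - 1 / (p i * p j) | i j. i < n \<and> j < n \<and> i \<noteq> j}"
      by (rule finite_subset[of _ "(\<lambda>(i, j). 1 - 1 / (p i * p j)) ` ({..<n} \<times> {..<n})"]) auto
    have "1 - 1 / (p 0 * p 1) \<in> {1 - 1 / (p i * p j) | i j. i < n \<and> j < n \<and> i \<noteq> j}"
      using two_le_n by (intro CollectI exI[of _ 0] exI[of _ "1::nat"]) auto
    then show "{1 - 1 / (p i * p j) | i j. i < n \<and> j < n \<and> i \<noteq> j} \<noteq> {}"
      by blast
    show "\<forall>a\<in>{1 - 1 / (p i * p j) | i j. i < n \<and> j < n \<and> i \<noteq> j}. a \<le> r"
      using off_diagonal_bound assms(2) by fastforce
  qed
  ultimately show ?thesis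
    by simp
qed

end

theorem proposition6:
  fixes M :: "'a measure" and X Y :: "'a \<Rightarrow> real" and n :: nat and x :: "nat \<Rightarrow> real"
    and r :: real and P :: "nat \<Rightarrow> nat \<Rightarrow> real" and p :: "nat \<Rightarrow> real"
  assumes "prob_space M"
    and "X \<in> borel_measurable M" and "Y \<in> borel_measurable M"
    and "n \<ge> 2"
    and "\<And>i j. i < j \<Longrightarrow> j < n \<Longrightarrow> x i < x j"
    and "\<And>w. w \<in> space M \<Longrightarrow> X w \<in> x ` {..<n}"
    and "\<And>w. w \<in> space M \<Longrightarrow> Y w \<in> x ` {..<n}"
    and "distr M borel X = distr M borel Y"
    and "\<And>i. i < n \<Longrightarrow> measure M {w \<in> space M. X w = x i} > 0"
    and P_def: "\<And>i j. P i j = measure M {w \<in> space M. X w = x i \<and> Y w = x j}"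
    and p_def: "\<And>i. p i = (\<Sum>j<n. P i j)"
    and "-1 \<le> r" and "r \<le> 1"
  shows "(IC M X Y r \<longleftrightarrow>
           (\<forall>i<n. \<forall>j<n. (P i j + P j i) / 2
               = r * (if i = j then p i else 0) + (1 - r) * p i * p j))
       \<and> (IC M X Y r \<longrightarrow>
           max (Max ((\<lambda>j. - (p j / (1 - p j))) ` {..<n}))
               (Max {1 - 1 / (p i * p j) | i j. i < n \<and> j < n \<and> i \<noteq> j}) \<le> r
           \<and> r \<le> 1)"
proof -
  interpret finite_valued_pair M X Y n x P p
    unfolding finite_valued_pair_def finite_valued_pair_axioms_def using assms by blast
  show ?thesis
    using IC_iff_symmetric_part IC_lower_bound \<open>-1 \<le> r\<close> \<open>r \<le> 1\<close> by blast
qed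

end
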